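(* Let $\Omega\subseteq\mathbb{F}$ be a P-closed set with finite P-basis $\mathcal{B}$ and $n=\mathrm{Rk}(\Omega)$, and let $\mathcal{C}\subseteq\mathbb{F}^\mathcal{B}$ be a left linear code of dimension $k\ge1$. Then $\mathrm{d}_\mathcal{B}(\mathcal{C})=n-k+1$ (i.e. $\mathcal{C}$ is maximum skew distance) if and only if $\pi_{\mathcal{B},\mathcal{A}}(\mathcal{C})\subseteq\mathbb{F}^\mathcal{A}$ is MDS (has minimum Hamming distance $n-k+1$) for every P-basis $\mathcal{A}$ of $\Omega$.
   Context: $\mathbb{F}$ is a division ring, $\sigma$ a ring endomorphism, $\delta$ a $\sigma$-derivation; $\mathbb{F}[x;\sigma,\delta]$ the skew polynomial ring ($xa=\sigma(a)x+\delta(a)$), evaluation $F(a)$ defined by $F-F(a)\in\mathbb{F}[x;\sigma,\delta](x-a)$. P-closure $\overline\Omega$ is the common zero set of all skew polynomials vanishing on $\Omega$; P-closed, P-independent (no element in the P-closure of the others), P-basis (P-independent subset whose P-closure is $\Omega$); $\mathrm{Rk}(\Omega)$ is the common size of P-bases. $E_\mathcal{B}$ (evaluation on $\mathcal{B}$) is a bijection from skew polynomials of degree $<n$ onto $\mathbb{F}^\mathcal{B}$. Skew weight $\mathrm{wt}_\mathcal{B}(E_\mathcal{B}(F))=n-\mathrm{Rk}(Z(F)\cap\Omega)$; $\mathrm{d}_\mathcal{B}(\mathcal{C})$ is the minimum of $\mathrm{wt}_\mathcal{B}(f-g)$ over distinct $f,g\in\mathcal{C}$. $\pi_{\mathcal{B},\mathcal{A}}(E_\mathcal{B}(F))=E_\mathcal{A}(F)$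 for $\deg F<n$. *)

theory Defs
  imports "HOL-Computational_Algebra.Polynomial"
begin

text \<open>Skew polynomials are represented by their (left) coefficient lists,
  i.e. an element of type 'a poly stands for sum_i (coeff p i) x^i with
  coefficients written on the left. Multiplication follows x a = sigma(a) x + delta(a).\<close>

definition ring_endo :: "('a::division_ring \<Rightarrow> 'a) \<Rightarrow> bool" where
  "ring_endo \<sigma> \<longleftrightarrow> \<sigma> 1 = 1 \<and> (\<forall>a b. \<sigma> (a + b) = \<sigma> a + \<sigma> b)
      \<and> (\<forall>a b. \<sigma> (a * b) = \<sigma> a * \<sigma> b)"

definition sigma_derivation :: "('a::division_ring \<Rightarrow> 'a) \<Rightarrow> ('a \<Rightarrow> 'a) \<Rightarrow> bool" where
  "sigma_derivation \<sigma> \<delta> \<longleftrightarrow> (\<forall>a b. \<delta> (a + b) = \<delta> a + \<delta> b)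
      \<and> (\<forall>a b. \<delta> (a * b) = \<sigma> a * \<delta> b + \<delta> a * b)"

definition xmul :: "('a::division_ring \<Rightarrow> 'a) \<Rightarrow> ('a \<Rightarrow> 'a) \<Rightarrow> 'a poly \<Rightarrow> 'a poly" where
  "xmul \<sigma> \<delta> p = pCons 0 (map_poly \<sigma> p) + map_poly \<delta> p"

definition lsmult :: "'a::division_ring \<Rightarrow> 'a poly \<Rightarrow> 'a poly" where
  "lsmult a p = map_poly (\<lambda>c. a * c) p"

definition skew_mult :: "('a::division_ring \<Rightarrow> 'a) \<Rightarrow> ('a \<Rightarrow> 'a) \<Rightarrow> 'a poly \<Rightarrow> 'a poly \<Rightarrow> 'a poly" where
  "skew_mult \<sigma> \<delta> p q = (\<Sum>i\<le>degree p. lsmult (coeff p i) ((xmul \<sigma> \<delta> ^^ i) q))"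

definition skew_eval :: "('a::division_ring \<Rightarrow> 'a) \<Rightarrow> ('a \<Rightarrow> 'a) \<Rightarrow> 'a poly \<Rightarrow> 'a \<Rightarrow> 'a" where
  "skew_eval \<sigma> \<delta> F a = (THE b. \<exists>Q. F - [:b:] = skew_mult \<sigma> \<delta> Q [:- a, 1:])"

definition zeros :: "('a::division_ring \<Rightarrow> 'a) \<Rightarrow> ('a \<Rightarrow> 'a) \<Rightarrow> 'a poly \<Rightarrow> 'a set" where
  "zeros \<sigma> \<delta> F = {a. skew_eval \<sigma> \<delta> F a = 0}"

definition Pclosure :: "('a::division_ring \<Rightarrow> 'a) \<Rightarrow> ('a \<Rightarrow> 'a) \<Rightarrow> 'a set \<Rightarrow> 'a set" where
  "Pclosure \<sigma> \<delta> \<Omega> = {a. \<forall>F. (\<forall>b\<in>\<Omega>. skew_eval \<sigma> \<delta> F b = 0) \<longrightarrow> skew_eval \<sigma> \<delta> F a = 0}"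

definition P_closed :: "('a::division_ring \<Rightarrow> 'a) \<Rightarrow> ('a \<Rightarrow> 'a) \<Rightarrow> 'a set \<Rightarrow> bool" where
  "P_closed \<sigma> \<delta> \<Omega> \<longleftrightarrow> Pclosure \<sigma> \<delta> \<Omega> = \<Omega>"

definition P_indep :: "('a::division_ring \<Rightarrow> 'a) \<Rightarrow> ('a \<Rightarrow> 'a) \<Rightarrow> 'a set \<Rightarrow> bool" where
  "P_indep \<sigma> \<delta> B \<longleftrightarrow> (\<forall>b\<in>B. b \<notin> Pclosure \<sigma> \<delta> (B - {b}))"

definition P_basis :: "('a::division_ring \<Rightarrow> 'a) \<Rightarrow> ('a \<Rightarrow> 'a) \<Rightarrow> 'a set \<Rightarrow> 'a set \<Rightarrow> bool" where
  "P_basis \<sigma> \<delta> B \<Omega> \<longleftrightarrow> B \<subseteq> \<Omega> \<and> P_indep \<sigma> \<delta> B \<and> Pclosure \<sigma> \<delta> B = \<Omega>"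

definition Rk :: "('a::division_ring \<Rightarrow> 'a) \<Rightarrow> ('a \<Rightarrow> 'a) \<Rightarrow> 'a set \<Rightarrow> nat" where
  "Rk \<sigma> \<delta> \<Omega> = card (SOME B. P_basis \<sigma> \<delta> B \<Omega>)"

text \<open>Vectors in F^B are functions 'a => 'a vanishing outside B.\<close>
definition vecs :: "'a::division_ring set \<Rightarrow> ('a \<Rightarrow> 'a) set" where
  "vecs B = {c. \<forall>x. x \<notin> B \<longrightarrow> c x = 0}"

definition left_code :: "'a::division_ring set \<Rightarrow> ('a \<Rightarrow> 'a) set \<Rightarrow> bool" where
  "left_code B C \<longleftrightarrow> C \<subseteq> vecs B \<and> (\<lambda>_. 0) \<in> C
     \<and> (\<forall>u\<in>C. \<forall>v\<in>C. (\<lambda>i. u i + v i) \<in> C)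
     \<and> (\<forall>a. \<forall>u\<in>C. (\<lambda>i. a * u i) \<in> C)"

definition lcomb :: "(('b \<Rightarrow> 'a) \<Rightarrow> 'a::division_ring) \<Rightarrow> ('b \<Rightarrow> 'a) set \<Rightarrow> 'b \<Rightarrow> 'a" where
  "lcomb c S = (\<lambda>i. \<Sum>v\<in>S. c v * v i)"

definition left_indep :: "('b \<Rightarrow> 'a::division_ring) set \<Rightarrow> bool" where
  "left_indep S \<longleftrightarrow> (\<forall>c. lcomb c S = (\<lambda>_. 0) \<longrightarrow> (\<forall>v\<in>S. c v = 0))"

definition left_span :: "('b \<Rightarrow> 'a::division_ring) set \<Rightarrow> ('b \<Rightarrow> 'a) set" where
  "left_span S = {lcomb c S | c. True}"

definition left_basis :: "('b \<Rightarrow> 'a::division_ring) set \<Rightarrow> ('b \<Rightarrow> 'a) set \<Rightarrow> bool" where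
  "left_basis S C \<longleftrightarrow> finite S \<and> S \<subseteq> C \<and> left_indep S \<and> left_span S = C"

definition left_dim :: "('b \<Rightarrow> 'a::division_ring) set \<Rightarrow> nat" where
  "left_dim C = card (SOME S. left_basis S C)"

definition E :: "('a::division_ring \<Rightarrow> 'a) \<Rightarrow> ('a \<Rightarrow> 'a) \<Rightarrow> 'a set \<Rightarrow> 'a poly \<Rightarrow> 'a \<Rightarrow> 'a" where
  "E \<sigma> \<delta> B F = (\<lambda>b. if b \<in> B then skew_eval \<sigma> \<delta> F b else 0)"

definition interp :: "('a::division_ring \<Rightarrow> 'a) \<Rightarrow> ('a \<Rightarrow> 'a) \<Rightarrow> 'a set \<Rightarrow> ('a \<Rightarrow> 'a) \<Rightarrow> 'a poly" where
  "interp \<sigma> \<delta> B c = (THE F. degree F < Rk \<sigma> \<delta> (Pclosure \<sigma> \<delta> B) \<and> E \<sigma> \<delta> B F = c)"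

definition skew_wt :: "('a::division_ring \<Rightarrow> 'a) \<Rightarrow> ('a \<Rightarrow> 'a) \<Rightarrow> 'a set \<Rightarrow> ('a \<Rightarrow> 'a) \<Rightarrow> nat" where
  "skew_wt \<sigma> \<delta> B c = Rk \<sigma> \<delta> (Pclosure \<sigma> \<delta> B)
      - Rk \<sigma> \<delta> (zeros \<sigma> \<delta> (interp \<sigma> \<delta> B c) \<inter> Pclosure \<sigma> \<delta> B)"

definition skew_dist :: "('a::division_ring \<Rightarrow> 'a) \<Rightarrow> ('a \<Rightarrow> 'a) \<Rightarrow> 'a set \<Rightarrow> ('a \<Rightarrow> 'a) set \<Rightarrow> nat" where
  "skew_dist \<sigma> \<delta> B C = Inf {skew_wt \<sigma> \<delta> B (\<lambda>i. f i - g i) | f g. f \<in> C \<and> g \<in> C \<and> f \<noteq> g}"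

definition ham_wt :: "'a set \<Rightarrow> ('a \<Rightarrow> 'b::zero) \<Rightarrow> nat" where
  "ham_wt A c = card {a\<in>A. c a \<noteq> 0}"

definition ham_dist :: "'a set \<Rightarrow> ('a \<Rightarrow> 'b::ab_group_add) set \<Rightarrow> nat" where
  "ham_dist A D = Inf {ham_wt A (\<lambda>i. f i - g i) | f g. f \<in> D \<and> g \<in> D \<and> f \<noteq> g}"

definition proj :: "('a::division_ring \<Rightarrow> 'a) \<Rightarrow> ('a \<Rightarrow> 'a) \<Rightarrow> 'a set \<Rightarrow> 'a set \<Rightarrow> ('a \<Rightarrow> 'a) \<Rightarrow> 'a \<Rightarrow> 'a" where
  "proj \<sigma> \<delta> B A c = E \<sigma> \<delta> A (interp \<sigma> \<delta> B c)"

end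

theory Submission
  imports Defs
begin

text \<open>Let \<open>F\<close> be the skew polynomial of degree below \<open>n = card B\<close> interpolating a codeword on
  \<open>B\<close>. Its zero set \<open>Z\<close> in \<open>\<Omega>\<close> is P-closed, and the skew weight of the codeword is
  \<open>n - Rk Z\<close>. For any P-basis \<open>A\<close> of \<open>\<Omega>\<close>, the set \<open>A \<inter> Z\<close> is P-independent inside \<open>Z\<close>, so
  the Hamming weight \<open>n - card (A \<inter> Z)\<close> of the projected codeword is at least the skew weight,
  with equality when \<open>A\<close> extends a P-basis of \<open>Z\<close>. Hence the skew distance of \<open>C\<close> is the
  minimum of the Hamming distances of its projections. Each projection is a \<open>k\<close>-dimensional code
  of length \<open>n\<close>, whose distance is at most \<open>n - k + 1\<close> by the Singleton bound, so the skew
  distance equals \<open>n - k + 1\<close> iff every projection attains that bound.\<close>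

lemma homogeneous_system_nontrivial_solution:
  fixes M :: "'i \<Rightarrow> 'j \<Rightarrow> 'a::division_ring"
  assumes "finite I" "finite J" "card J < card I"
  shows "\<exists>c. (\<exists>i\<in>I. c i \<noteq> 0) \<and> (\<forall>j\<in>J. (\<Sum>i\<in>I. c i * M i j) = 0)"
  using assms(2,1,3)
proof (induction J arbitrary: I M rule: finite_induct)
  case empty
  then obtain i where "i \<in> I" by fastforce
  then show ?case by (intro exI[of _ "\<lambda>_. 1"]) auto
next
  case (insert j J)
  show ?case
  proof (cases "\<forall>i\<in>I. M i j = 0")
    case True
    from insert.IH[of I M] insert.prems insert.hyps obtain c where
      c: "\<exists>i\<in>I. c i \<noteq> 0" "\<forall>j\<in>J. (\<Sum>i\<in>I. c i * M i j) = 0" by auto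
    then show ?thesis using True by (intro exI[of _ c]) auto
  next
    case False
    then obtain i0 where i0: "i0 \<in> I" "M i0 j \<noteq> 0" by blast
    \<comment> \<open>Gaussian elimination: clear column \<open>j\<close> using row \<open>i0\<close>, solve the smaller system, then
      choose the coefficient of row \<open>i0\<close> so that column \<open>j\<close> vanishes as well.\<close>
    define I' where "I' = I - {i0}"
    have fI': "finite I'" using insert.prems by (simp add: I'_def)
    have cI': "card J < card I'" using insert.prems insert.hyps i0 by (simp add: I'_def)
    define M' where "M' i j' = M i j' - M i j * inverse (M i0 j) * M i0 j'" for i j'
    from insert.IH[OF fI' cI', of M'] obtain c' where
      c': "\<exists>i\<in>I'. c' i \<noteq> 0" "\<forall>j'\<in>J. (\<Sum>i\<in>I'. c' i * M' i j') = 0" by blast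
    define s where "s = (\<Sum>k\<in>I'. c' k * M k j)"
    define c where "c i = (if i = i0 then - s * inverse (M i0 j) else c' i)" for i
    have split: "(\<Sum>i\<in>I. c i * M i j') = c i0 * M i0 j' + (\<Sum>i\<in>I'. c' i * M i j')" for j'
    proof -
      have "(\<Sum>i\<in>I. c i * M i j') = c i0 * M i0 j' + (\<Sum>i\<in>I'. c i * M i j')"
        unfolding I'_def using insert.prems i0 by (simp add: sum.remove)
      also have "(\<Sum>i\<in>I'. c i * M i j') = (\<Sum>i\<in>I'. c' i * M i j')"
        by (rule sum.cong) (auto simp: c_def I'_def)
      finally show ?thesis .
    qed
    have column_j: "(\<Sum>i\<in>I. c i * M i j) = 0"
      using i0 by (subst split) (simp add: c_def s_def mult.assoc)
    have columns_J: "(\<Sum>i\<in>I. c i * M i j') = 0" if "j' \<in> J" for j'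
    proof -
      have "(\<Sum>i\<in>I'. c' i * M' i j') = (\<Sum>i\<in>I'. c' i * M i j') - s * inverse (M i0 j) * M i0 j'"
        by (simp add: M'_def s_def right_diff_distrib sum_subtractf sum_distrib_right mult.assoc)
      moreover have "c i0 * M i0 j' = - (s * inverse (M i0 j) * M i0 j')" by (simp add: c_def)
      ultimately show ?thesis using c'(2) that by (simp add: split)
    qed
    have "\<exists>i\<in>I. c i \<noteq> 0" using c'(1) by (auto simp: c_def I'_def)
    then show ?thesis using column_j columns_J by (intro exI[of _ c]) auto
  qed
qed

lemma lcomb_insert: "finite S \<Longrightarrow> v \<notin> S \<Longrightarrow> lcomb c (insert v S) i = c v * v i + lcomb c S i"
  by (simp add: lcomb_def)

lemma lcomb_indicator:
  assumes "finite S" "u \<in> S"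
  shows "lcomb (\<lambda>w. if w = u then 1 else 0) S = u"
proof
  fix i
  have "lcomb (\<lambda>w. if w = u then 1 else 0) S i = (\<Sum>w\<in>S. if w = u then w i else 0)"
    unfolding lcomb_def by (rule sum.cong) auto
  also have "\<dots> = u i" using assms by simp
  finally show "lcomb (\<lambda>w. if w = u then 1 else 0) S i = u i" .
qed

lemma left_code_subset_vecs: "left_code B C \<Longrightarrow> C \<subseteq> vecs B"
  and left_code_zero: "left_code B C \<Longrightarrow> (\<lambda>_. 0) \<in> C"
  and left_code_add: "left_code B C \<Longrightarrow> u \<in> C \<Longrightarrow> v \<in> C \<Longrightarrow> (\<lambda>i. u i + v i) \<in> C"
  and left_code_smult: "left_code B C \<Longrightarrow> u \<in> C \<Longrightarrow> (\<lambda>i. a * u i) \<in> C"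
  unfolding left_code_def by blast+

lemma left_code_lcomb:
  assumes "left_code B C" "finite S" "S \<subseteq> C"
  shows "lcomb c S \<in> C"
  using assms(2,3)
proof (induction S rule: finite_induct)
  case empty
  have "lcomb c {} = (\<lambda>_. 0)" by (simp add: lcomb_def)
  then show ?case using left_code_zero[OF assms(1)] by simp
next
  case (insert v S)
  then have "lcomb c S \<in> C" "v \<in> C" by auto
  then have "(\<lambda>i. c v * v i + lcomb c S i) \<in> C"
    using assms(1) by (intro left_code_add left_code_smult)
  moreover have "lcomb c (insert v S) = (\<lambda>i. c v * v i + lcomb c S i)"
    using insert.hyps by (simp add: lcomb_insert fun_eq_iff)
  ultimately show ?case by simp
qed

lemma left_indep_nonzero:
  fixes S :: "('b \<Rightarrow> 'a::division_ring) set"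
  assumes "finite S" "left_indep S" "v \<in> S"
  shows "v \<noteq> (\<lambda>_. 0)"
proof
  assume "v = (\<lambda>_. 0)"
  then have "lcomb (\<lambda>w. if w = v then 1 else 0) S = (\<lambda>_. 0)"
    using lcomb_indicator[OF assms(1,3)] by simp
  then have "(\<lambda>w. if w = v then 1 else (0::'a)) v = 0"
    using assms(2,3) unfolding left_indep_def by blast
  then show False by simp
qed

lemma left_indep_card_le:
  fixes S :: "('a \<Rightarrow> 'a::division_ring) set"
  assumes "finite B" "finite S" "S \<subseteq> vecs B" "left_indep S"
  shows "card S \<le> card B"
proof (rule ccontr)
  assume "\<not> card S \<le> card B"
  then have "card B < card S" by simp
  then have "\<exists>c. (\<exists>v\<in>S. c v \<noteq> 0) \<and> (\<forall>b\<in>B. (\<Sum>v\<in>S. c v * v b) = 0)"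
    by (rule homogeneous_system_nontrivial_solution[OF assms(2,1), of "\<lambda>v b. v b"])
  then obtain c where c: "\<exists>v\<in>S. c v \<noteq> 0" "\<forall>b\<in>B. (\<Sum>v\<in>S. c v * v b) = 0"
    by (elim exE conjE)
  have "lcomb c S i = 0" for i
  proof (cases "i \<in> B")
    case False
    then have "\<forall>v\<in>S. v i = 0" using assms(3) by (auto simp: vecs_def)
    then show ?thesis unfolding lcomb_def by (intro sum.neutral) simp
  qed (use c(2) in \<open>simp add: lcomb_def\<close>)
  then show False using c(1) assms(4) unfolding left_indep_def by blast
qed

lemma in_left_span_if_insert_dependent:
  assumes "finite S" "left_indep S" "u \<notin> S" "\<not> left_indep (insert u S)"
  shows "u \<in> left_span S"
proof -
  obtain c where c: "lcomb c (insert u S) = (\<lambda>_. 0)" "\<exists>v\<in>insert u S. c v \<noteq> 0"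
    using assms(4) unfolding left_indep_def by blast
  have e: "c u * u i + lcomb c S i = 0" for i
    using fun_cong[OF c(1), of i] lcomb_insert[OF assms(1,3)] by simp
  have cu: "c u \<noteq> 0"
  proof
    assume "c u = 0"
    then have "lcomb c S = (\<lambda>_. 0)" using e by auto
    then have "\<forall>v\<in>S. c v = 0" using assms(2) unfolding left_indep_def by blast
    then show False using c(2) \<open>c u = 0\<close> by auto
  qed
  have "u = lcomb (\<lambda>v. - inverse (c u) * c v) S"
  proof
    fix i
    have lin: "c u * u i = - lcomb c S i" using e[of i] by (simp add: eq_neg_iff_add_eq_0)
    have "u i = inverse (c u) * (c u * u i)" using cu by (simp add: mult.assoc[symmetric])
    also have "\<dots> = - inverse (c u) * lcomb c S i" by (simp add: lin)
    also have "\<dots> = lcomb (\<lambda>v. - inverse (c u) * c v) S i"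
      by (simp add: lcomb_def sum_distrib_left mult.assoc)
    finally show "u i = lcomb (\<lambda>v. - inverse (c u) * c v) S i" .
  qed
  then show ?thesis unfolding left_span_def by blast
qed

lemma ex_left_basis:
  fixes C :: "('a \<Rightarrow> 'a::division_ring) set"
  assumes "left_code B C" "finite B"
  shows "\<exists>S. left_basis S C"
proof -
  define K where "K = {card S | S. finite S \<and> S \<subseteq> C \<and> left_indep S}"
  have "K \<subseteq> {..card B}"
  proof
    fix m assume "m \<in> K"
    then obtain S where S: "m = card S" "finite S" "S \<subseteq> C" "left_indep S" unfolding K_def by blast
    then have "S \<subseteq> vecs B" using left_code_subset_vecs[OF assms(1)] by blast
    then show "m \<in> {..card B}" using left_indep_card_le[OF assms(2) S(2) _ S(4)] S(1) by simp
  qed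
  then have fK: "finite K" by (rule finite_subset) simp
  have "left_indep {}" by (simp add: left_indep_def)
  then have "card ({} :: ('a \<Rightarrow> 'a) set) \<in> K" unfolding K_def by blast
  then have "Max K \<in> K" using fK by (intro Max_in) auto
  then obtain S where S: "finite S" "S \<subseteq> C" "left_indep S" and card_S: "Max K = card S"
    unfolding K_def by (elim CollectE exE conjE) simp
  have "C \<subseteq> left_span S"
  proof
    fix u assume u: "u \<in> C"
    show "u \<in> left_span S"
    proof (cases "u \<in> S")
      case True
      then have "u = lcomb (\<lambda>w. if w = u then 1 else 0) S" by (simp add: lcomb_indicator S(1))
      then show ?thesis unfolding left_span_def by blast
    next
      case False
      have "\<not> left_indep (insert u S)"
      proof
        assume "left_indep (insert u S)"
        then have "card (insert u S) \<in> K" unfolding K_def using S u by blast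
        then have "card (insert u S) \<le> Max K" using fK by simp
        then show False using False S(1) card_S by simp
      qed
      then show ?thesis using in_left_span_if_insert_dependent[OF S(1,3) False] by blast
    qed
  qed
  moreover have "left_span S \<subseteq> C"
    using left_code_lcomb[OF assms(1) S(1,2)] by (auto simp: left_span_def)
  ultimately show ?thesis using S by (auto simp: left_basis_def)
qed

lemma coeff_lsmult[simp]: "coeff (lsmult a p) n = a * coeff p n"
  by (simp add: lsmult_def coeff_map_poly)

lemma lsmult_add: "lsmult a (p + q) = lsmult a p + lsmult a q"
  by (rule poly_eqI) (simp add: distrib_left)

lemma lsmult_add_left: "lsmult (a + b) p = lsmult a p + lsmult b p"
  by (rule poly_eqI) (simp add: distrib_right)

lemma lsmult_lsmult: "lsmult a (lsmult b p) = lsmult (a * b) p"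
  by (rule poly_eqI) (simp add: mult.assoc)

lemma lsmult_0_left[simp]: "lsmult 0 p = 0" by (rule poly_eqI) simp

lemma lsmult_0_right[simp]: "lsmult a 0 = 0" by (rule poly_eqI) simp

lemma lsmult_diff: "lsmult a (p - q) = lsmult a p - lsmult a q"
  by (rule poly_eqI) (simp add: right_diff_distrib)

lemma lsmult_sum: "lsmult a (sum f S) = (\<Sum>i\<in>S. lsmult a (f i))"
  by (induction S rule: infinite_finite_induct) (auto simp: lsmult_add)

lemma degree_lsmult_le: "degree (lsmult a p) \<le> degree p"
  by (rule degree_le) (simp add: coeff_eq_0)

lemma degree_lsmult: "a \<noteq> 0 \<Longrightarrow> degree (lsmult a p) = degree p"
proof (cases "p = 0")
  case False
  assume "a \<noteq> 0"
  then have "coeff (lsmult a p) (degree p) \<noteq> 0" using False by simp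
  then have "degree p \<le> degree (lsmult a p)" by (rule le_degree)
  then show ?thesis using degree_lsmult_le[of a p] by simp
qed simp

lemma monom_lsmult: "monom c i = lsmult c (monom 1 i)"
  by (rule poly_eqI) simp

lemma lsmult_const: "lsmult c [:e:] = [:c * e:]"
  by (rule poly_eqI) (simp add: coeff_pCons')

locale skew_polynomial_ring =
  fixes \<sigma> \<delta> :: "'a::division_ring \<Rightarrow> 'a"
  assumes sigma_endo: "ring_endo \<sigma>" and delta_der: "sigma_derivation \<sigma> \<delta>"
begin

lemma sigma_add: "\<sigma> (a + b) = \<sigma> a + \<sigma> b"
  and sigma_mult: "\<sigma> (a * b) = \<sigma> a * \<sigma> b"
  and sigma_one[simp]: "\<sigma> 1 = 1"
  using sigma_endo by (simp_all add: ring_endo_def)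

lemma delta_add: "\<delta> (a + b) = \<delta> a + \<delta> b"
  and delta_mult: "\<delta> (a * b) = \<sigma> a * \<delta> b + \<delta> a * b"
  using delta_der by (simp_all add: sigma_derivation_def)

lemma sigma_0[simp]: "\<sigma> 0 = 0" using sigma_add[of 0 0] by simp

lemma delta_0[simp]: "\<delta> 0 = 0" using delta_add[of 0 0] by simp

lemma sigma_eq_zeroD: "\<sigma> a = 0 \<Longrightarrow> a = 0"
proof (rule ccontr)
  assume "\<sigma> a = 0" "a \<noteq> 0"
  have "\<sigma> (a * inverse a) = \<sigma> a * \<sigma> (inverse a)" by (rule sigma_mult)
  then have "\<sigma> (a * inverse a) = 0" using \<open>\<sigma> a = 0\<close> by simp
  moreover have "a * inverse a = 1" using \<open>a \<noteq> 0\<close> by simp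
  ultimately show False by simp
qed

lemma sigma_pow_one[simp]: "(\<sigma> ^^ j) 1 = 1" by (induction j) auto

lemma sigma_pow_eq_zeroD: "(\<sigma> ^^ j) a = 0 \<Longrightarrow> a = 0" by (induction j) (auto dest: sigma_eq_zeroD)

lemma coeff_xmul:
  "coeff (xmul \<sigma> \<delta> p) n = (if n = 0 then 0 else \<sigma> (coeff p (n - 1))) + \<delta> (coeff p n)"
  by (simp add: xmul_def coeff_map_poly coeff_pCons')

lemma xmul_add: "xmul \<sigma> \<delta> (p + q) = xmul \<sigma> \<delta> p + xmul \<sigma> \<delta> q"
  by (rule poly_eqI) (simp add: coeff_xmul sigma_add delta_add algebra_simps)

lemma xmul_0[simp]: "xmul \<sigma> \<delta> 0 = 0"
  by (rule poly_eqI) (simp add: coeff_xmul)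

lemma xmul_lsmult: "xmul \<sigma> \<delta> (lsmult a p) = lsmult (\<sigma> a) (xmul \<sigma> \<delta> p) + lsmult (\<delta> a) p"
  by (rule poly_eqI) (simp add: coeff_xmul sigma_mult delta_mult algebra_simps)

lemma degree_xmul: assumes "p \<noteq> 0"
  shows "degree (xmul \<sigma> \<delta> p) = Suc (degree p)
    \<and> coeff (xmul \<sigma> \<delta> p) (Suc (degree p)) = \<sigma> (lead_coeff p)"
proof -
  have c: "coeff (xmul \<sigma> \<delta> p) (Suc (degree p)) = \<sigma> (lead_coeff p)"
    by (simp add: coeff_xmul coeff_eq_0)
  moreover have "\<sigma> (lead_coeff p) \<noteq> 0" using assms sigma_eq_zeroD leading_coeff_0_iff by metis
  ultimately have "Suc (degree p) \<le> degree (xmul \<sigma> \<delta> p)" by (metis le_degree)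
  moreover have "degree (xmul \<sigma> \<delta> p) \<le> Suc (degree p)"
    by (rule degree_le) (auto simp: coeff_xmul coeff_eq_0)
  ultimately show ?thesis using c by simp
qed

lemma degree_xmul_pow: assumes "p \<noteq> 0"
  shows "degree ((xmul \<sigma> \<delta> ^^ j) p) = degree p + j
    \<and> coeff ((xmul \<sigma> \<delta> ^^ j) p) (degree p + j) = (\<sigma> ^^ j) (lead_coeff p)"
proof (induction j)
  case 0 then show ?case by simp
next
  case (Suc j)
  have "(xmul \<sigma> \<delta> ^^ j) p \<noteq> 0"
  proof
    assume "(xmul \<sigma> \<delta> ^^ j) p = 0"
    then have "(\<sigma> ^^ j) (lead_coeff p) = 0" using Suc by simp
    then show False using assms sigma_pow_eq_zeroD leading_coeff_0_iff by metis
  qed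
  from degree_xmul[OF this] Suc show ?case by simp
qed

lemma skew_mult_sum_lessThan: "degree P < m \<Longrightarrow>
  skew_mult \<sigma> \<delta> P Q = (\<Sum>i<m. lsmult (coeff P i) ((xmul \<sigma> \<delta> ^^ i) Q))"
  unfolding skew_mult_def
  by (rule sum.mono_neutral_left) (auto simp: coeff_eq_0)

lemma skew_mult_add_left: "skew_mult \<sigma> \<delta> (P + P') Q = skew_mult \<sigma> \<delta> P Q + skew_mult \<sigma> \<delta> P' Q"
proof -
  define m where "m = Suc (degree P + degree P')"
  have "degree (P + P') < m" unfolding m_def using degree_add_le_max[of P P'] by linarith
  then show ?thesis
    by (subst (1 2 3) skew_mult_sum_lessThan[where m = m])
      (auto simp: m_def lsmult_add_left sum.distrib)
qed

lemma skew_mult_0_left[simp]: "skew_mult \<sigma> \<delta> 0 Q = 0"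
  by (simp add: skew_mult_def)

lemma skew_mult_lsmult: "skew_mult \<sigma> \<delta> (lsmult a P) Q = lsmult a (skew_mult \<sigma> \<delta> P Q)"
proof -
  have "degree (lsmult a P) < Suc (degree P)" using degree_lsmult_le[of a P] by simp
  then show ?thesis
    by (subst (1 2) skew_mult_sum_lessThan[where m = "Suc (degree P)"])
      (simp_all only: lsmult_sum lsmult_lsmult coeff_lsmult lessI)
qed

lemma skew_mult_minus_left: "skew_mult \<sigma> \<delta> (- P) Q = - skew_mult \<sigma> \<delta> P Q"
  using skew_mult_add_left[of P "-P" Q] by (simp add: eq_neg_iff_add_eq_0 add.commute)

lemma skew_mult_diff_left: "skew_mult \<sigma> \<delta> (P - P') Q = skew_mult \<sigma> \<delta> P Q - skew_mult \<sigma> \<delta> P' Q"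
  using skew_mult_add_left[of P "-P'" Q] by (simp add: skew_mult_minus_left)

lemma skew_mult_sum_left: "skew_mult \<sigma> \<delta> (sum f S) Q = (\<Sum>i\<in>S. skew_mult \<sigma> \<delta> (f i) Q)"
  by (induction S rule: infinite_finite_induct) (auto simp: skew_mult_add_left)

lemma skew_mult_monom: "skew_mult \<sigma> \<delta> (monom c j) Q = lsmult c ((xmul \<sigma> \<delta> ^^ j) Q)"
proof -
  have "degree (monom c j) < Suc j" using degree_monom_le[of c j] by simp
  then show ?thesis
    by (subst skew_mult_sum_lessThan[where m = "Suc j"]) (auto simp: if_distrib cong: if_cong)
qed

lemma skew_mult_pCons0: "skew_mult \<sigma> \<delta> (pCons 0 P) Q = skew_mult \<sigma> \<delta> P (xmul \<sigma> \<delta> Q)"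
proof -
  have "degree (pCons 0 P) < Suc (Suc (degree P))" by simp
  then have "skew_mult \<sigma> \<delta> (pCons 0 P) Q
      = (\<Sum>i<Suc (Suc (degree P)). lsmult (coeff (pCons 0 P) i) ((xmul \<sigma> \<delta> ^^ i) Q))"
    by (rule skew_mult_sum_lessThan)
  also have "\<dots> = (\<Sum>i<Suc (degree P). lsmult (coeff P i) ((xmul \<sigma> \<delta> ^^ i) (xmul \<sigma> \<delta> Q)))"
    by (subst sum.lessThan_Suc_shift) (simp add: funpow_Suc_right del: funpow.simps)
  also have "\<dots> = skew_mult \<sigma> \<delta> P (xmul \<sigma> \<delta> Q)" by (rule skew_mult_sum_lessThan[symmetric]) simp
  finally show ?thesis .
qed

lemma skew_mult_map: assumes "f 0 = 0"
  shows "skew_mult \<sigma> \<delta> (map_poly f P) Q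
    = (\<Sum>i<Suc (degree P). lsmult (f (coeff P i)) ((xmul \<sigma> \<delta> ^^ i) Q))"
proof -
  have "degree (map_poly f P) < Suc (degree P)" using map_poly_degree_leq[of f P] by simp
  then show ?thesis
    by (subst skew_mult_sum_lessThan[where m = "Suc (degree P)"]) (auto simp: coeff_map_poly assms)
qed

lemma xmul_sum: "xmul \<sigma> \<delta> (sum f S) = (\<Sum>i\<in>S. xmul \<sigma> \<delta> (f i))"
  by (induction S rule: infinite_finite_induct) (auto simp: xmul_add)

lemma xmul_skew_mult: "xmul \<sigma> \<delta> (skew_mult \<sigma> \<delta> Q R) = skew_mult \<sigma> \<delta> (xmul \<sigma> \<delta> Q) R"
proof -
  let ?m = "Suc (degree Q)"
  have "xmul \<sigma> \<delta> (skew_mult \<sigma> \<delta> Q R) = xmul \<sigma> \<delta> (\<Sum>i<?m. lsmult (coeff Q i) ((xmul \<sigma> \<delta> ^^ i) R))"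
    by (subst skew_mult_sum_lessThan[where m = ?m]) auto
  also have "\<dots> = (\<Sum>i<?m. xmul \<sigma> \<delta> (lsmult (coeff Q i) ((xmul \<sigma> \<delta> ^^ i) R)))"
    by (rule xmul_sum)
  also have "\<dots> = (\<Sum>i<?m. lsmult (\<sigma> (coeff Q i)) ((xmul \<sigma> \<delta> ^^ i) (xmul \<sigma> \<delta> R)))
     + (\<Sum>i<?m. lsmult (\<delta> (coeff Q i)) ((xmul \<sigma> \<delta> ^^ i) R))"
    by (simp add: xmul_lsmult sum.distrib funpow_swap1)
  also have "\<dots> = skew_mult \<sigma> \<delta> (map_poly \<sigma> Q) (xmul \<sigma> \<delta> R) + skew_mult \<sigma> \<delta> (map_poly \<delta> Q) R"
    by (simp add: skew_mult_map)
  also have "\<dots> = skew_mult \<sigma> \<delta> (xmul \<sigma> \<delta> Q) R"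
    by (simp add: xmul_def skew_mult_add_left skew_mult_pCons0)
  finally show ?thesis .
qed

lemma xmul_pow_skew_mult:
  "(xmul \<sigma> \<delta> ^^ j) (skew_mult \<sigma> \<delta> Q R) = skew_mult \<sigma> \<delta> ((xmul \<sigma> \<delta> ^^ j) Q) R"
  by (induction j) (auto simp: xmul_skew_mult)

text \<open>Associativity reduces to compatibility with left multiplication by \<open>x\<close>, which is where
  the commutation rule \<open>x a = \<sigma>(a) x + \<delta>(a)\<close> enters.\<close>
lemma skew_mult_assoc: "skew_mult \<sigma> \<delta> G (skew_mult \<sigma> \<delta> Q R) = skew_mult \<sigma> \<delta> (skew_mult \<sigma> \<delta> G Q) R"
proof -
  have "skew_mult \<sigma> \<delta> G (skew_mult \<sigma> \<delta> Q R)
      = (\<Sum>i\<le>degree G. lsmult (coeff G i) (skew_mult \<sigma> \<delta> ((xmul \<sigma> \<delta> ^^ i) Q) R))"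
    by (simp add: skew_mult_def[of _ _ G] xmul_pow_skew_mult)
  also have "\<dots> = (\<Sum>i\<le>degree G. skew_mult \<sigma> \<delta> (lsmult (coeff G i) ((xmul \<sigma> \<delta> ^^ i) Q)) R)"
    by (simp add: skew_mult_lsmult)
  also have "\<dots> = skew_mult \<sigma> \<delta> (skew_mult \<sigma> \<delta> G Q) R"
    by (simp add: skew_mult_def[of _ _ G] skew_mult_sum_left)
  finally show ?thesis .
qed

lemma coeff_skew_mult_high:
  assumes "Q \<noteq> 0" "degree Q + degree P \<le> N"
  shows "coeff (skew_mult \<sigma> \<delta> P Q) N =
    (if N = degree Q + degree P then lead_coeff P * (\<sigma> ^^ degree P) (lead_coeff Q) else 0)"
proof -
  have z: "coeff ((xmul \<sigma> \<delta> ^^ i) Q) N = 0" if "i < degree P" for i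
    using degree_xmul_pow[OF assms(1), of i] that assms(2) by (intro coeff_eq_0) simp
  have "coeff (skew_mult \<sigma> \<delta> P Q) N = (\<Sum>i\<le>degree P. coeff P i * coeff ((xmul \<sigma> \<delta> ^^ i) Q) N)"
    by (simp add: skew_mult_def coeff_sum)
  also have "\<dots> = (\<Sum>i<degree P. coeff P i * coeff ((xmul \<sigma> \<delta> ^^ i) Q) N)
      + lead_coeff P * coeff ((xmul \<sigma> \<delta> ^^ degree P) Q) N"
    by (simp add: lessThan_Suc_atMost[symmetric])
  also have "\<dots> = lead_coeff P * coeff ((xmul \<sigma> \<delta> ^^ degree P) Q) N"
    using z by simp
  also have "\<dots>
      = (if N = degree Q + degree P then lead_coeff P * (\<sigma> ^^ degree P) (lead_coeff Q) else 0)"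
    using degree_xmul_pow[OF assms(1), of "degree P"] assms(2) by (auto intro: coeff_eq_0)
  finally show ?thesis .
qed

lemma degree_skew_mult:
  assumes "P \<noteq> 0" "Q \<noteq> 0"
  shows "degree (skew_mult \<sigma> \<delta> P Q) = degree Q + degree P"
proof (rule antisym)
  show "degree (skew_mult \<sigma> \<delta> P Q) \<le> degree Q + degree P"
    by (rule degree_le) (simp add: coeff_skew_mult_high[OF assms(2)])
  have "lead_coeff P * (\<sigma> ^^ degree P) (lead_coeff Q) \<noteq> 0"
    using assms sigma_pow_eq_zeroD leading_coeff_0_iff by (metis no_zero_divisors)
  then show "degree Q + degree P \<le> degree (skew_mult \<sigma> \<delta> P Q)"
    by (intro le_degree) (simp add: coeff_skew_mult_high[OF assms(2)])
qed

lemma skew_div_monic: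
  assumes M: "lead_coeff M = 1"
  shows "\<exists>Q R. G = skew_mult \<sigma> \<delta> Q M + R \<and> (R = 0 \<or> degree R < degree M)"
proof (induction "degree G" arbitrary: G rule: less_induct)
  case less
  show ?case
  proof (cases "G = 0 \<or> degree G < degree M")
    case True
    then show ?thesis by (intro exI[of _ 0] exI[of _ G]) auto
  next
    case False
    then have G0: "G \<noteq> 0" and ge: "degree M \<le> degree G" by auto
    have M0: "M \<noteq> 0" using M by auto
    define j where "j = degree G - degree M"
    define T where "T = skew_mult \<sigma> \<delta> (monom (lead_coeff G) j) M"
    have T: "T = lsmult (lead_coeff G) ((xmul \<sigma> \<delta> ^^ j) M)"
      by (simp add: T_def skew_mult_monom)
    have dj: "degree M + j = degree G" using ge by (simp add: j_def)
    have cT: "coeff T N = (if N = degree G then lead_coeff G else 0)" if "N \<ge> degree G" for N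
      using degree_xmul_pow[OF M0, of j] that dj M by (auto simp: T intro: coeff_eq_0)
    define G' where "G' = G - T"
    have cG': "coeff G' N = 0" if "N \<ge> degree G" for N
      using cT[OF that] that by (auto simp: G'_def intro: coeff_eq_0)
    show ?thesis
    proof (cases "G' = 0")
      case True
      then have "G = skew_mult \<sigma> \<delta> (monom (lead_coeff G) j) M + 0" by (simp add: G'_def T_def)
      then show ?thesis by blast
    next
      case False
      then have "degree G' < degree G" using cG' leading_coeff_0_iff by (metis not_le)
      from less[OF this] obtain Q R
        where QR: "G' = skew_mult \<sigma> \<delta> Q M + R" "R = 0 \<or> degree R < degree M"
        by blast
      have "G = skew_mult \<sigma> \<delta> (Q + monom (lead_coeff G) j) M + R"
        using QR(1) by (simp add: G'_def T_def skew_mult_add_left algebra_simps)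
      then show ?thesis using QR(2) by blast
    qed
  qed
qed

abbreviation x_minus :: "'a \<Rightarrow> 'a poly" where "x_minus a \<equiv> [:- a, 1:]"

lemma lead_coeff_x_minus[simp]: "lead_coeff (x_minus a) = 1"
  and degree_x_minus[simp]: "degree (x_minus a) = 1"
  by auto

lemma skew_eval_eqI:
  assumes "F - [:b:] = skew_mult \<sigma> \<delta> Q (x_minus a)"
  shows "skew_eval \<sigma> \<delta> F a = b"
  unfolding skew_eval_def
proof (rule the_equality)
  show "\<exists>Q. F - [:b:] = skew_mult \<sigma> \<delta> Q (x_minus a)" using assms by blast
next
  fix b' assume "\<exists>Q'. F - [:b':] = skew_mult \<sigma> \<delta> Q' (x_minus a)"
  then obtain Q' where "F - [:b':] = skew_mult \<sigma> \<delta> Q' (x_minus a)" by blast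
  moreover have "[:b - b':] = (F - [:b':]) - (F - [:b:])" by simp
  ultimately have const: "[:b - b':] = skew_mult \<sigma> \<delta> (Q' - Q) (x_minus a)"
    using assms by (simp add: skew_mult_diff_left)
  show "b' = b"
  proof (cases "Q' = Q")
    case False
    then have "degree (skew_mult \<sigma> \<delta> (Q' - Q) (x_minus a)) = 1 + degree (Q' - Q)"
      using degree_skew_mult[of "Q' - Q" "x_minus a"] by auto
    then have "degree [:b - b':] \<noteq> 0" using const by simp
    then show ?thesis by simp
  qed (use const in simp)
qed

lemma skew_eval_remainder: "\<exists>Q. F - [:skew_eval \<sigma> \<delta> F a:] = skew_mult \<sigma> \<delta> Q (x_minus a)"
proof -
  obtain Q R where QR: "F = skew_mult \<sigma> \<delta> Q (x_minus a) + R" "R = 0 \<or> degree R < 1"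
    using skew_div_monic[OF lead_coeff_x_minus, of F a] by auto
  then have "degree R = 0" by auto
  then obtain r where "R = [:r:]" using degree0_coeffs by blast
  then have "F - [:r:] = skew_mult \<sigma> \<delta> Q (x_minus a)" using QR(1) by simp
  moreover from this have "skew_eval \<sigma> \<delta> F a = r" by (rule skew_eval_eqI)
  ultimately show ?thesis by auto
qed

lemma skew_eval_eq_0_iff: "skew_eval \<sigma> \<delta> F a = 0 \<longleftrightarrow> (\<exists>Q. F = skew_mult \<sigma> \<delta> Q (x_minus a))"
  using skew_eval_remainder[of F a] skew_eval_eqI[of F 0 _ a] by auto

lemma skew_eval_add: "skew_eval \<sigma> \<delta> (F + G) a = skew_eval \<sigma> \<delta> F a + skew_eval \<sigma> \<delta> G a"
proof -
  obtain Q1 Q2 where "F - [:skew_eval \<sigma> \<delta> F a:] = skew_mult \<sigma> \<delta> Q1 (x_minus a)"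
      "G - [:skew_eval \<sigma> \<delta> G a:] = skew_mult \<sigma> \<delta> Q2 (x_minus a)"
    using skew_eval_remainder by blast
  moreover have "(F + G) - [:skew_eval \<sigma> \<delta> F a + skew_eval \<sigma> \<delta> G a:]
     = (F - [:skew_eval \<sigma> \<delta> F a:]) + (G - [:skew_eval \<sigma> \<delta> G a:])"
    by simp
  ultimately have "(F + G) - [:skew_eval \<sigma> \<delta> F a + skew_eval \<sigma> \<delta> G a:]
     = skew_mult \<sigma> \<delta> (Q1 + Q2) (x_minus a)"
    by (simp add: skew_mult_add_left)
  then show ?thesis by (rule skew_eval_eqI)
qed

lemma skew_eval_lsmult: "skew_eval \<sigma> \<delta> (lsmult c F) a = c * skew_eval \<sigma> \<delta> F a"
proof -
  obtain Q where "F - [:skew_eval \<sigma> \<delta> F a:] = skew_mult \<sigma> \<delta> Q (x_minus a)"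
    using skew_eval_remainder by blast
  then have "lsmult c F - [:c * skew_eval \<sigma> \<delta> F a:] = skew_mult \<sigma> \<delta> (lsmult c Q) (x_minus a)"
    by (simp add: skew_mult_lsmult flip: lsmult_const lsmult_diff)
  then show ?thesis by (rule skew_eval_eqI)
qed

lemma skew_eval_const[simp]: "skew_eval \<sigma> \<delta> [:c:] a = c"
  by (rule skew_eval_eqI[where Q = 0]) simp

lemma skew_eval_0[simp]: "skew_eval \<sigma> \<delta> 0 a = 0"
  using skew_eval_const[of 0] by simp

lemma skew_eval_minus: "skew_eval \<sigma> \<delta> (- F) a = - skew_eval \<sigma> \<delta> F a"
  using skew_eval_add[of F "-F" a] by (simp add: eq_neg_iff_add_eq_0 add.commute)

lemma skew_eval_diff: "skew_eval \<sigma> \<delta> (F - G) a = skew_eval \<sigma> \<delta> F a - skew_eval \<sigma> \<delta> G a"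
  using skew_eval_add[of F "-G" a] by (simp add: skew_eval_minus)

lemma skew_eval_sum: "skew_eval \<sigma> \<delta> (sum f S) a = (\<Sum>i\<in>S. skew_eval \<sigma> \<delta> (f i) a)"
  by (induction S rule: infinite_finite_induct) (auto simp: skew_eval_add)

lemma skew_eval_sum_monoms:
  "skew_eval \<sigma> \<delta> (\<Sum>i<m. monom (c i) i) b = (\<Sum>i<m. c i * skew_eval \<sigma> \<delta> (monom 1 i) b)"
  by (simp add: skew_eval_sum monom_lsmult[of "c _"] skew_eval_lsmult)

lemma skew_eval_skew_mult_eq_0:
  "skew_eval \<sigma> \<delta> F a = 0 \<Longrightarrow> skew_eval \<sigma> \<delta> (skew_mult \<sigma> \<delta> G F) a = 0"
  unfolding skew_eval_eq_0_iff by (auto simp: skew_mult_assoc)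

end

lemma subset_Pclosure: "S \<subseteq> Pclosure \<sigma> \<delta> S"
  by (auto simp: Pclosure_def)

lemma Pclosure_mono: "S \<subseteq> T \<Longrightarrow> Pclosure \<sigma> \<delta> S \<subseteq> Pclosure \<sigma> \<delta> T"
  by (auto simp: Pclosure_def)

lemma Pclosure_Pclosure: "Pclosure \<sigma> \<delta> (Pclosure \<sigma> \<delta> S) = Pclosure \<sigma> \<delta> S"
  by (rule antisym) (auto simp: Pclosure_def)

lemma subset_zeros_Pclosure: "S \<subseteq> zeros \<sigma> \<delta> F \<Longrightarrow> Pclosure \<sigma> \<delta> S \<subseteq> zeros \<sigma> \<delta> F"
  by (auto simp: Pclosure_def zeros_def)

lemma P_closed_zeros_Int_Pclosure: "P_closed \<sigma> \<delta> (zeros \<sigma> \<delta> F \<inter> Pclosure \<sigma> \<delta> B)"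
proof -
  have "Pclosure \<sigma> \<delta> (zeros \<sigma> \<delta> F \<inter> Pclosure \<sigma> \<delta> B) \<subseteq> zeros \<sigma> \<delta> F"
    by (rule subset_zeros_Pclosure) blast
  moreover have "Pclosure \<sigma> \<delta> (zeros \<sigma> \<delta> F \<inter> Pclosure \<sigma> \<delta> B) \<subseteq> Pclosure \<sigma> \<delta> B"
    using Pclosure_mono[of "zeros \<sigma> \<delta> F \<inter> Pclosure \<sigma> \<delta> B" "Pclosure \<sigma> \<delta> B" \<sigma> \<delta>]
    by (simp add: Pclosure_Pclosure)
  ultimately show ?thesis
    unfolding P_closed_def using subset_Pclosure[of "zeros \<sigma> \<delta> F \<inter> Pclosure \<sigma> \<delta> B" \<sigma> \<delta>] by blast
qed

lemma P_indep_subset: "T \<subseteq> S \<Longrightarrow> P_indep \<sigma> \<delta> S \<Longrightarrow> P_indep \<sigma> \<delta> T"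
  unfolding P_indep_def by (meson Diff_mono Pclosure_mono subset_eq order_refl)

lemma coeff_sum_monoms: "coeff (\<Sum>i<m. monom (c i) i) k = (if k < m then c k else 0)"
  by (simp add: coeff_sum)

lemma degree_sum_monoms_less: "0 < m \<Longrightarrow> degree (\<Sum>i<m. monom (c i) i) < m"
proof -
  assume "0 < m"
  have "degree (\<Sum>i<m. monom (c i) i) \<le> m - 1" by (rule degree_le) (auto simp: coeff_sum_monoms)
  then show ?thesis using \<open>0 < m\<close> by linarith
qed

lemma sum_monoms_eq_0_iff: "(\<Sum>i<m. monom (c i) i) = 0 \<longleftrightarrow> (\<forall>i<m. c i = 0)"
  by (auto simp: poly_eq_iff coeff_sum_monoms)

text \<open>For finite \<open>S\<close> this is equivalent to P-independence, and it is the form in which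
  P-independence is used.\<close>
definition no_low_degree_annihilator :: "('a::division_ring \<Rightarrow> 'a) \<Rightarrow> ('a \<Rightarrow> 'a) \<Rightarrow> 'a set \<Rightarrow> bool"
  where "no_low_degree_annihilator \<sigma> \<delta> S \<longleftrightarrow>
    (\<forall>F. F \<noteq> 0 \<longrightarrow> degree F < card S \<longrightarrow> \<not> S \<subseteq> zeros \<sigma> \<delta> F)"

context skew_polynomial_ring
begin

lemma ex_low_degree_annihilator:
  assumes "finite S" "card S < m"
  shows "\<exists>F. F \<noteq> 0 \<and> degree F < m \<and> S \<subseteq> zeros \<sigma> \<delta> F"
proof -
  have "\<exists>c. (\<exists>i\<in>{..<m}. c i \<noteq> 0) \<and>
      (\<forall>s\<in>S. (\<Sum>i\<in>{..<m}. c i * skew_eval \<sigma> \<delta> (monom 1 i) s) = 0)"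
    by (rule homogeneous_system_nontrivial_solution) (use assms in auto)
  then obtain c where c: "\<exists>i<m. c i \<noteq> 0"
    "\<forall>s\<in>S. (\<Sum>i<m. c i * skew_eval \<sigma> \<delta> (monom 1 i) s) = 0"
    by auto
  define F where "F = (\<Sum>i<m. monom (c i) i)"
  have "F \<noteq> 0" using c(1) by (simp add: F_def sum_monoms_eq_0_iff)
  moreover have "degree F < m" using c(1) by (auto simp: F_def intro: degree_sum_monoms_less)
  moreover have "S \<subseteq> zeros \<sigma> \<delta> F" using c(2) by (auto simp: F_def zeros_def skew_eval_sum_monoms)
  ultimately show ?thesis by blast
qed

lemma P_indep_if_no_low_degree_annihilator:
  assumes "finite S" "no_low_degree_annihilator \<sigma> \<delta> S"
  shows "P_indep \<sigma> \<delta> S"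
  unfolding P_indep_def
proof (intro ballI notI)
  fix b assume b: "b \<in> S" "b \<in> Pclosure \<sigma> \<delta> (S - {b})"
  have "card (S - {b}) < card S" using assms(1) b(1) by (meson card_Diff1_less)
  then obtain F where F: "F \<noteq> 0" "degree F < card S" "S - {b} \<subseteq> zeros \<sigma> \<delta> F"
    using ex_low_degree_annihilator[of "S - {b}" "card S"] assms(1) by auto
  then have "b \<in> zeros \<sigma> \<delta> F" using b(2) subset_zeros_Pclosure by blast
  then have "S \<subseteq> zeros \<sigma> \<delta> F" using F(3) by blast
  then show False using F assms(2) by (auto simp: no_low_degree_annihilator_def)
qed

text \<open>A nonzero skew polynomial of minimal degree vanishing on \<open>D\<close> right-divides every skew
  polynomial vanishing on \<open>D\<close>, so its zeros lie in the P-closure of \<open>D\<close>.\<close>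
lemma zeros_subset_Pclosure_if_minimal:
  assumes "D \<subseteq> zeros \<sigma> \<delta> G" "G \<noteq> 0"
    and minimal: "\<And>H. H \<noteq> 0 \<Longrightarrow> degree H < degree G \<Longrightarrow> \<not> D \<subseteq> zeros \<sigma> \<delta> H"
  shows "zeros \<sigma> \<delta> G \<subseteq> Pclosure \<sigma> \<delta> D"
proof
  fix y assume "y \<in> zeros \<sigma> \<delta> G"
  define G' where "G' = lsmult (inverse (lead_coeff G)) G"
  have lc: "lead_coeff G \<noteq> 0" using assms(2) by simp
  have dG': "degree G' = degree G" using lc by (simp add: G'_def degree_lsmult)
  have monic: "lead_coeff G' = 1" using lc dG' by (simp add: G'_def)
  have zero_G': "skew_eval \<sigma> \<delta> G' z = 0 \<longleftrightarrow> skew_eval \<sigma> \<delta> G z = 0" for z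
    using lc by (simp add: G'_def skew_eval_lsmult)
  show "y \<in> Pclosure \<sigma> \<delta> D"
    unfolding Pclosure_def
  proof (intro CollectI allI impI)
    fix F assume F: "\<forall>b\<in>D. skew_eval \<sigma> \<delta> F b = 0"
    obtain Q R where QR: "F = skew_mult \<sigma> \<delta> Q G' + R" "R = 0 \<or> degree R < degree G'"
      using skew_div_monic[OF monic] by blast
    have "skew_eval \<sigma> \<delta> (skew_mult \<sigma> \<delta> Q G') b = 0" if "b \<in> D" for b
      using that assms(1) by (intro skew_eval_skew_mult_eq_0) (auto simp: zeros_def zero_G')
    moreover have "R = F - skew_mult \<sigma> \<delta> Q G'" using QR(1) by simp
    ultimately have "D \<subseteq> zeros \<sigma> \<delta> R" using F by (auto simp: zeros_def skew_eval_diff)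
    then have "R = 0" using QR(2) minimal dG' by auto
    moreover have "skew_eval \<sigma> \<delta> G' y = 0" using \<open>y \<in> zeros \<sigma> \<delta> G\<close> zero_G' by (simp add: zeros_def)
    ultimately show "skew_eval \<sigma> \<delta> F y = 0" using QR(1) by (simp add: skew_eval_skew_mult_eq_0)
  qed
qed

lemma no_low_degree_annihilator_insert:
  assumes "finite D" "no_low_degree_annihilator \<sigma> \<delta> D" "x \<notin> Pclosure \<sigma> \<delta> D"
  shows "no_low_degree_annihilator \<sigma> \<delta> (insert x D)"
  unfolding no_low_degree_annihilator_def
proof (intro allI impI notI)
  fix F assume F: "F \<noteq> 0" "degree F < card (insert x D)" "insert x D \<subseteq> zeros \<sigma> \<delta> F"
  have "x \<notin> D" using assms(3) subset_Pclosure by blast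
  have "\<not> degree F < card D" using assms(2) F by (auto simp: no_low_degree_annihilator_def)
  then have "degree F = card D" using F(2) \<open>x \<notin> D\<close> assms(1) by simp
  then have "zeros \<sigma> \<delta> F \<subseteq> Pclosure \<sigma> \<delta> D"
    using F assms(2)
    by (intro zeros_subset_Pclosure_if_minimal) (auto simp: no_low_degree_annihilator_def)
  then show False using F(3) assms(3) by blast
qed

lemma no_low_degree_annihilator_if_P_indep:
  assumes "finite S" "P_indep \<sigma> \<delta> S"
  shows "no_low_degree_annihilator \<sigma> \<delta> S"
  using assms
proof (induction S rule: finite_induct)
  case empty
  then show ?case by (simp add: no_low_degree_annihilator_def)
next
  case (insert b S)
  have "b \<notin> Pclosure \<sigma> \<delta> S"
    using insert.prems insert.hyps(2) by (auto simp: P_indep_def)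
  moreover have "P_indep \<sigma> \<delta> S" using insert.prems P_indep_subset by blast
  ultimately show ?case using insert by (intro no_low_degree_annihilator_insert) auto
qed

lemma P_indep_insert:
  assumes "finite D" "P_indep \<sigma> \<delta> D" "x \<notin> Pclosure \<sigma> \<delta> D"
  shows "P_indep \<sigma> \<delta> (insert x D)"
proof -
  have "no_low_degree_annihilator \<sigma> \<delta> (insert x D)"
    using assms by (intro no_low_degree_annihilator_insert no_low_degree_annihilator_if_P_indep)
  then show ?thesis using assms(1) by (intro P_indep_if_no_low_degree_annihilator) auto
qed

lemma P_indep_finite_card_le:
  assumes "finite B" "T \<subseteq> Pclosure \<sigma> \<delta> B" "P_indep \<sigma> \<delta> T"
  shows "finite T \<and> card T \<le> card B"
proof (rule ccontr)
  assume not_le: "\<not> (finite T \<and> card T \<le> card B)"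
  obtain T' where T': "T' \<subseteq> T" "finite T'" "card T' = Suc (card B)"
  proof (cases "finite T")
    case True
    then have "Suc (card B) \<le> card T" using not_le by simp
    then show ?thesis using that obtain_subset_with_card_n by metis
  next
    case False
    then show ?thesis using that infinite_arbitrarily_large by metis
  qed
  obtain F where F: "F \<noteq> 0" "degree F < Suc (card B)" "B \<subseteq> zeros \<sigma> \<delta> F"
    using ex_low_degree_annihilator[OF assms(1), of "Suc (card B)"] by auto
  have "T' \<subseteq> zeros \<sigma> \<delta> F" using subset_zeros_Pclosure[OF F(3)] T'(1) assms(2) by blast
  moreover have "no_low_degree_annihilator \<sigma> \<delta> T'"
    using T' assms(3) P_indep_subset no_low_degree_annihilator_if_P_indep by blast
  moreover have "degree F < card T'" using F(2) T'(3) by simp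
  ultimately show False using F(1) unfolding no_low_degree_annihilator_def by blast
qed

end

context skew_polynomial_ring
begin

lemma Rk_eq_card:
  assumes "P_basis \<sigma> \<delta> A W" "finite A"
  shows "Rk \<sigma> \<delta> W = card A"
proof -
  define A' where "A' = (SOME B. P_basis \<sigma> \<delta> B W)"
  have A': "P_basis \<sigma> \<delta> A' W" unfolding A'_def using assms(1) by (rule someI)
  have "A' \<subseteq> Pclosure \<sigma> \<delta> A" "P_indep \<sigma> \<delta> A'" "A \<subseteq> Pclosure \<sigma> \<delta> A'" "P_indep \<sigma> \<delta> A"
    using A' assms(1) unfolding P_basis_def by auto
  then have "finite A' \<and> card A' \<le> card A" "card A \<le> card A'"
    using P_indep_finite_card_le assms(2) by blast+
  then show ?thesis by (simp add: Rk_def A'_def)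
qed

lemma Rk_Pclosure: "finite B \<Longrightarrow> P_indep \<sigma> \<delta> B \<Longrightarrow> Rk \<sigma> \<delta> (Pclosure \<sigma> \<delta> B) = card B"
  by (rule Rk_eq_card) (auto simp: P_basis_def subset_Pclosure)

lemma P_basis_finite_card:
  assumes "finite B" "P_indep \<sigma> \<delta> B" "P_basis \<sigma> \<delta> A (Pclosure \<sigma> \<delta> B)"
  shows "finite A" "card A = card B"
proof -
  show "finite A"
    using assms P_indep_finite_card_le unfolding P_basis_def by blast
  then show "card A = card B"
    using Rk_eq_card[OF assms(3)] Rk_Pclosure[OF assms(1,2)] by simp
qed

lemma ex_P_basis_extending:
  assumes "finite B" "P_closed \<sigma> \<delta> Y" "Y \<subseteq> Pclosure \<sigma> \<delta> B" "D0 \<subseteq> Y" "P_indep \<sigma> \<delta> D0"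
  shows "\<exists>D. D0 \<subseteq> D \<and> finite D \<and> P_basis \<sigma> \<delta> D Y"
proof -
  define K where "K = {card D | D. D0 \<subseteq> D \<and> D \<subseteq> Y \<and> P_indep \<sigma> \<delta> D}"
  have "K \<subseteq> {..card B}"
  proof
    fix m assume "m \<in> K"
    then obtain D where "m = card D" "D \<subseteq> Y" "P_indep \<sigma> \<delta> D" unfolding K_def by blast
    then show "m \<in> {..card B}" using assms(1,3) P_indep_finite_card_le[of B D] by auto
  qed
  then have fK: "finite K" by (rule finite_subset) simp
  have "card D0 \<in> K" using assms(4,5) unfolding K_def by blast
  then have "Max K \<in> K" using fK by (intro Max_in) auto
  then obtain D where D: "D0 \<subseteq> D" "D \<subseteq> Y" "P_indep \<sigma> \<delta> D" and card_D: "Max K = card D"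
    unfolding K_def by (elim CollectE exE conjE) simp
  have fD: "finite D" using D(2,3) assms(1,3) P_indep_finite_card_le[of B D] by auto
  have "Y \<subseteq> Pclosure \<sigma> \<delta> D"
  proof
    fix x assume x: "x \<in> Y"
    show "x \<in> Pclosure \<sigma> \<delta> D"
    proof (rule ccontr)
      assume nx: "x \<notin> Pclosure \<sigma> \<delta> D"
      then have "x \<notin> D" using subset_Pclosure by blast
      have "P_indep \<sigma> \<delta> (insert x D)" using P_indep_insert[OF fD D(3) nx] .
      then have "card (insert x D) \<in> K" using D(1,2) x unfolding K_def by blast
      then have "card (insert x D) \<le> Max K" using fK by simp
      then show False using \<open>x \<notin> D\<close> fD card_D by simp
    qed
  qed
  moreover have "Pclosure \<sigma> \<delta> D \<subseteq> Y"
    using Pclosure_mono[OF D(2), of \<sigma> \<delta>] assms(2) by (simp add: P_closed_def)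
  ultimately show ?thesis using D fD by (auto simp: P_basis_def)
qed

lemma card_Int_le_Rk:
  assumes "finite B" "P_closed \<sigma> \<delta> Y" "Y \<subseteq> Pclosure \<sigma> \<delta> B"
    and "A \<subseteq> Pclosure \<sigma> \<delta> B" "P_indep \<sigma> \<delta> A"
  shows "card (A \<inter> Y) \<le> Rk \<sigma> \<delta> Y"
proof -
  obtain D where D: "finite D" "P_basis \<sigma> \<delta> D Y"
    using ex_P_basis_extending[OF assms(1-3), of "{}"] by (auto simp: P_indep_def)
  have "A \<inter> Y \<subseteq> Pclosure \<sigma> \<delta> D" using D(2) by (auto simp: P_basis_def)
  moreover have "P_indep \<sigma> \<delta> (A \<inter> Y)" using assms(5) P_indep_subset by blast
  ultimately have "card (A \<inter> Y) \<le> card D" using P_indep_finite_card_le[OF D(1)] by blast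
  then show ?thesis using Rk_eq_card[OF D(2,1)] by simp
qed

lemma ex_P_basis_card_Int_eq_Rk:
  assumes "finite B" "P_indep \<sigma> \<delta> B" "P_closed \<sigma> \<delta> Y" "Y \<subseteq> Pclosure \<sigma> \<delta> B"
  shows "\<exists>A. P_basis \<sigma> \<delta> A (Pclosure \<sigma> \<delta> B) \<and> card (A \<inter> Y) = Rk \<sigma> \<delta> Y"
proof -
  obtain D where D: "finite D" "P_basis \<sigma> \<delta> D Y"
    using ex_P_basis_extending[OF assms(1,3,4), of "{}"] by (auto simp: P_indep_def)
  have closed: "P_closed \<sigma> \<delta> (Pclosure \<sigma> \<delta> B)" by (simp add: P_closed_def Pclosure_Pclosure)
  have "D \<subseteq> Pclosure \<sigma> \<delta> B" "P_indep \<sigma> \<delta> D" using D(2) assms(4) by (auto simp: P_basis_def)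
  then obtain A where A: "D \<subseteq> A" "finite A" "P_basis \<sigma> \<delta> A (Pclosure \<sigma> \<delta> B)"
    using ex_P_basis_extending[OF assms(1) closed order_refl] by blast
  have "card D \<le> card (A \<inter> Y)" using A(1,2) D(2) by (intro card_mono) (auto simp: P_basis_def)
  moreover have "card (A \<inter> Y) \<le> Rk \<sigma> \<delta> Y"
    using A(3) by (intro card_Int_le_Rk[OF assms(1,3,4)]) (auto simp: P_basis_def)
  ultimately show ?thesis using A(3) Rk_eq_card[OF D(2,1)] by auto
qed

end

lemma ham_wt_E:
  assumes "finite A"
  shows "ham_wt A (E \<sigma> \<delta> A F) = card A - card (A \<inter> zeros \<sigma> \<delta> F)"
proof -
  have "{a\<in>A. E \<sigma> \<delta> A F a \<noteq> 0} = A - (A \<inter> zeros \<sigma> \<delta> F)" by (auto simp: E_def zeros_def)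
  then show ?thesis unfolding ham_wt_def using assms by (simp add: card_Diff_subset)
qed

context skew_polynomial_ring
begin

lemma E_inj:
  assumes "finite B" "P_indep \<sigma> \<delta> B" "degree F < card B" "degree G < card B"
    and "E \<sigma> \<delta> B F = E \<sigma> \<delta> B G"
  shows "F = G"
proof (rule ccontr)
  assume "F \<noteq> G"
  moreover have "degree (F - G) < card B"
    using assms(3,4) degree_diff_le[of F "card B - 1" G] by linarith
  moreover have "skew_eval \<sigma> \<delta> F b = skew_eval \<sigma> \<delta> G b" if "b \<in> B" for b
    using fun_cong[OF assms(5), of b] that by (simp add: E_def)
  then have "B \<subseteq> zeros \<sigma> \<delta> (F - G)" by (auto simp: zeros_def skew_eval_diff)
  ultimately show False
    using no_low_degree_annihilator_if_P_indep[OF assms(1,2)]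
    by (auto simp: no_low_degree_annihilator_def)
qed

lemma E_surj:
  assumes "finite B" "P_indep \<sigma> \<delta> B" "B \<noteq> {}" "c \<in> vecs B"
  shows "\<exists>F. degree F < card B \<and> E \<sigma> \<delta> B F = c"
proof -
  define N where "N = card B"
  \<comment> \<open>A nontrivial relation between the columns of \<open>x\<^sup>0, \<dots>, x\<^sup>N\<^sup>-\<^sup>1\<close> evaluated on \<open>B\<close> and \<open>c\<close>;
    the coefficient of \<open>c\<close> is nonzero because \<open>B\<close> is P-independent.\<close>
  define M where "M i b = (if i < N then skew_eval \<sigma> \<delta> (monom 1 i) b else c b)" for i b
  have "\<exists>a. (\<exists>i\<in>{..<Suc N}. a i \<noteq> 0) \<and> (\<forall>b\<in>B. (\<Sum>i\<in>{..<Suc N}. a i * M i b) = 0)"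
    by (rule homogeneous_system_nontrivial_solution) (use assms(1) in \<open>auto simp: N_def\<close>)
  then obtain a where a: "\<exists>i<Suc N. a i \<noteq> 0" "\<forall>b\<in>B. (\<Sum>i<Suc N. a i * M i b) = 0"
    by auto
  have relation: "(\<Sum>i<N. a i * skew_eval \<sigma> \<delta> (monom 1 i) b) = - (a N * c b)" if "b \<in> B" for b
  proof -
    have "(\<Sum>i<Suc N. a i * M i b) = (\<Sum>i<N. a i * skew_eval \<sigma> \<delta> (monom 1 i) b) + a N * c b"
      by (simp add: M_def)
    then show ?thesis using a(2) that by (simp add: eq_neg_iff_add_eq_0)
  qed
  have N_pos: "0 < N" using assms(1,3) by (simp add: N_def card_gt_0_iff)
  have aN: "a N \<noteq> 0"
  proof
    assume aN0: "a N = 0"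
    define F where "F = (\<Sum>i<N. monom (a i) i)"
    have "F \<noteq> 0" using a(1) aN0 by (auto simp: F_def sum_monoms_eq_0_iff less_Suc_eq)
    moreover have "degree F < card B" using N_pos by (simp add: F_def N_def degree_sum_monoms_less)
    moreover have "B \<subseteq> zeros \<sigma> \<delta> F"
      using relation aN0 by (auto simp: zeros_def F_def skew_eval_sum_monoms)
    ultimately show False
      using no_low_degree_annihilator_if_P_indep[OF assms(1,2)]
      by (auto simp: no_low_degree_annihilator_def)
  qed
  define F where "F = (\<Sum>i<N. monom (- inverse (a N) * a i) i)"
  have "degree F < card B" using N_pos by (simp add: F_def N_def degree_sum_monoms_less)
  moreover have "skew_eval \<sigma> \<delta> F b = c b" if "b \<in> B" for b
  proof -
    have "skew_eval \<sigma> \<delta> F b = - inverse (a N) * (\<Sum>i<N. a i * skew_eval \<sigma> \<delta> (monom 1 i) b)"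
      by (simp add: F_def skew_eval_sum_monoms sum_distrib_left mult.assoc)
    then show ?thesis using relation[OF that] aN by (simp add: mult.assoc[symmetric])
  qed
  then have "E \<sigma> \<delta> B F = c" using assms(4) by (auto simp: E_def vecs_def)
  ultimately show ?thesis by blast
qed

lemma interp_eqI:
  assumes "finite B" "P_indep \<sigma> \<delta> B" "degree F < card B" "E \<sigma> \<delta> B F = c"
  shows "interp \<sigma> \<delta> B c = F"
  unfolding interp_def Rk_Pclosure[OF assms(1,2)]
  using assms E_inj[OF assms(1,2)] by blast

lemma
  assumes "finite B" "P_indep \<sigma> \<delta> B" "B \<noteq> {}" "c \<in> vecs B"
  shows degree_interp: "degree (interp \<sigma> \<delta> B c) < card B"
    and E_interp: "E \<sigma> \<delta> B (interp \<sigma> \<delta> B c) = c"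
  using E_surj[OF assms] interp_eqI[OF assms(1,2)] by auto

lemma skew_eval_interp:
  assumes "finite B" "P_indep \<sigma> \<delta> B" "B \<noteq> {}" "c \<in> vecs B" "b \<in> B"
  shows "skew_eval \<sigma> \<delta> (interp \<sigma> \<delta> B c) b = c b"
  using fun_cong[OF E_interp[OF assms(1-4)], of b] assms(5) by (simp add: E_def)

lemma interp_lcomb:
  assumes "finite B" "P_indep \<sigma> \<delta> B" "B \<noteq> {}" "finite S" "S \<subseteq> vecs B"
  shows "interp \<sigma> \<delta> B (lcomb c S) = (\<Sum>u\<in>S. lsmult (c u) (interp \<sigma> \<delta> B u))"
proof (rule interp_eqI[OF assms(1,2)])
  have "degree (lsmult (c u) (interp \<sigma> \<delta> B u)) \<le> card B - 1" if "u \<in> S" for u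
  proof -
    have "degree (interp \<sigma> \<delta> B u) < card B"
      using degree_interp[OF assms(1-3)] that assms(5) by blast
    then show ?thesis using degree_lsmult_le[of "c u" "interp \<sigma> \<delta> B u"] by linarith
  qed
  then have "degree (\<Sum>u\<in>S. lsmult (c u) (interp \<sigma> \<delta> B u)) \<le> card B - 1"
    using assms(4) by (rule degree_sum_le[rotated])
  moreover have "0 < card B" using assms(1,3) by (simp add: card_gt_0_iff)
  ultimately show "degree (\<Sum>u\<in>S. lsmult (c u) (interp \<sigma> \<delta> B u)) < card B" by linarith
  show "E \<sigma> \<delta> B (\<Sum>u\<in>S. lsmult (c u) (interp \<sigma> \<delta> B u)) = lcomb c S"
  proof
    fix i
    have "u i = (if i \<in> B then skew_eval \<sigma> \<delta> (interp \<sigma> \<delta> B u) i else 0)" if "u \<in> S" for u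
      using skew_eval_interp[OF assms(1-3)] that assms(5) by (auto simp: vecs_def)
    then show "E \<sigma> \<delta> B (\<Sum>u\<in>S. lsmult (c u) (interp \<sigma> \<delta> B u)) i = lcomb c S i"
      by (auto simp: E_def lcomb_def skew_eval_sum skew_eval_lsmult intro: sum.cong sum.neutral)
  qed
qed

lemma interp_diff:
  assumes "finite B" "P_indep \<sigma> \<delta> B" "B \<noteq> {}" "f \<in> vecs B" "g \<in> vecs B"
  shows "interp \<sigma> \<delta> B (\<lambda>i. f i - g i) = interp \<sigma> \<delta> B f - interp \<sigma> \<delta> B g"
proof (rule interp_eqI[OF assms(1,2)])
  have "degree (interp \<sigma> \<delta> B f - interp \<sigma> \<delta> B g) \<le> card B - 1"
    using degree_interp[OF assms(1-4)] degree_interp[OF assms(1-3,5)] by (intro degree_diff_le) auto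
  moreover have "0 < card B" using assms(1,3) by (simp add: card_gt_0_iff)
  ultimately show "degree (interp \<sigma> \<delta> B f - interp \<sigma> \<delta> B g) < card B" by linarith
  show "E \<sigma> \<delta> B (interp \<sigma> \<delta> B f - interp \<sigma> \<delta> B g) = (\<lambda>i. f i - g i)"
    using skew_eval_interp[OF assms(1-4)] skew_eval_interp[OF assms(1-3,5)] assms(4,5)
    by (auto simp: E_def vecs_def skew_eval_diff)
qed

end

lemma left_code_differences_image:
  assumes "left_code B C"
  shows "{\<phi> (\<lambda>i. f i - g i) | f g. f \<in> C \<and> g \<in> C \<and> f \<noteq> g} = \<phi> ` (C - {\<lambda>_. 0})"
proof (intro equalityI subsetI)
  fix x assume "x \<in> {\<phi> (\<lambda>i. f i - g i) | f g. f \<in> C \<and> g \<in> C \<and> f \<noteq> g}"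
  then obtain f g where fg: "f \<in> C" "g \<in> C" "f \<noteq> g" "x = \<phi> (\<lambda>i. f i - g i)" by blast
  have "(\<lambda>i. f i + (- 1) * g i) \<in> C" using assms fg by (intro left_code_add left_code_smult)
  moreover have "(\<lambda>i. f i - g i) \<noteq> (\<lambda>_. 0)" using fg(3) by (auto simp: fun_eq_iff)
  ultimately show "x \<in> \<phi> ` (C - {\<lambda>_. 0})" using fg(4) by auto
next
  fix x assume "x \<in> \<phi> ` (C - {\<lambda>_. 0})"
  then obtain f where "f \<in> C" "f \<noteq> (\<lambda>_. 0)" "x = \<phi> (\<lambda>i. f i - 0)" by auto
  then show "x \<in> {\<phi> (\<lambda>i. f i - g i) | f g. f \<in> C \<and> g \<in> C \<and> f \<noteq> g}"
    using left_code_zero[OF assms] by (intro CollectI exI[of _ f] exI[of _ "\<lambda>_. 0"]) simp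
qed

lemma skew_dist_eq_Inf:
  "left_code B C \<Longrightarrow> skew_dist \<sigma> \<delta> B C = Inf (skew_wt \<sigma> \<delta> B ` (C - {\<lambda>_. 0}))"
  unfolding skew_dist_def by (simp add: left_code_differences_image)

text \<open>The skew weight is the pointwise minimum of the Hamming weights of the projections, so the
  skew distance is the minimum of their Hamming distances; if all of these are at most \<open>N\<close>,
  the former equals \<open>N\<close> iff each of the latter does.\<close>
lemma Inf_pointwise_min_eq_iff:
  fixes s :: "'h \<Rightarrow> nat" and w :: "'i \<Rightarrow> 'h \<Rightarrow> nat"
  assumes "I \<noteq> {}"
    and le: "\<And>i h. i \<in> I \<Longrightarrow> h \<in> W \<Longrightarrow> s h \<le> w i h"
    and attained: "\<And>h. h \<in> W \<Longrightarrow> \<exists>i\<in>I. w i h = s h"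
    and bound: "\<And>i. i \<in> I \<Longrightarrow> \<exists>h\<in>W. w i h \<le> N"
  shows "Inf (s ` W) = N \<longleftrightarrow> (\<forall>i\<in>I. Inf (w i ` W) = N)"
proof -
  obtain i0 where "i0 \<in> I" using assms(1) by blast
  then have "W \<noteq> {}" using bound by blast
  have Inf_w_le: "Inf (w i ` W) \<le> N" if "i \<in> I" for i
    using bound[OF that] by (meson cInf_lower2 imageI bdd_below_bot)
  have Inf_s_le: "Inf (s ` W) \<le> Inf (w i ` W)" if "i \<in> I" for i
    using \<open>W \<noteq> {}\<close> le[OF that] by (intro cInf_greatest) (auto intro: cInf_lower2)
  have "Inf (s ` W) \<in> s ` W" using \<open>W \<noteq> {}\<close> by (intro Inf_nat_def1) simp
  then obtain h0 where h0: "h0 \<in> W" "s h0 = Inf (s ` W)" by (metis imageE)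
  obtain i1 where i1: "i1 \<in> I" "w i1 h0 = s h0" using attained[OF h0(1)] by blast
  then have "Inf (w i1 ` W) \<le> Inf (s ` W)"
    using cInf_lower[OF imageI[OF h0(1)] bdd_below_bot, of "w i1"] h0(2) by simp
  show ?thesis
    using Inf_w_le Inf_s_le i1(1) \<open>Inf (w i1 ` W) \<le> Inf (s ` W)\<close> \<open>i0 \<in> I\<close>
    by (metis le_antisym)
qed

context skew_polynomial_ring
begin

lemma ham_wt_proj:
  assumes "P_basis \<sigma> \<delta> A (Pclosure \<sigma> \<delta> B)" "finite B" "P_indep \<sigma> \<delta> B"
  shows "ham_wt A (proj \<sigma> \<delta> B A h)
    = card B - card (A \<inter> (zeros \<sigma> \<delta> (interp \<sigma> \<delta> B h) \<inter> Pclosure \<sigma> \<delta> B))"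
proof -
  have "A \<subseteq> Pclosure \<sigma> \<delta> B" using assms(1) by (simp add: P_basis_def)
  then have "A \<inter> (zeros \<sigma> \<delta> (interp \<sigma> \<delta> B h) \<inter> Pclosure \<sigma> \<delta> B) = A \<inter> zeros \<sigma> \<delta> (interp \<sigma> \<delta> B h)"
    by blast
  then show ?thesis
    using ham_wt_E[of A \<sigma> \<delta> "interp \<sigma> \<delta> B h"] P_basis_finite_card[OF assms(2,3,1)]
    by (simp add: proj_def)
qed

lemma skew_wt_le_ham_wt_proj:
  assumes "finite B" "P_indep \<sigma> \<delta> B" "P_basis \<sigma> \<delta> A (Pclosure \<sigma> \<delta> B)"
  shows "skew_wt \<sigma> \<delta> B h \<le> ham_wt A (proj \<sigma> \<delta> B A h)"
proof -
  have "A \<subseteq> Pclosure \<sigma> \<delta> B" "P_indep \<sigma> \<delta> A" using assms(3) by (auto simp: P_basis_def)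
  then have "card (A \<inter> (zeros \<sigma> \<delta> (interp \<sigma> \<delta> B h) \<inter> Pclosure \<sigma> \<delta> B))
      \<le> Rk \<sigma> \<delta> (zeros \<sigma> \<delta> (interp \<sigma> \<delta> B h) \<inter> Pclosure \<sigma> \<delta> B)"
    using assms(1) P_closed_zeros_Int_Pclosure by (intro card_Int_le_Rk) auto
  then show ?thesis
    using assms by (simp add: skew_wt_def Rk_Pclosure ham_wt_proj diff_le_mono2)
qed

lemma ex_P_basis_skew_wt_eq_ham_wt_proj:
  assumes "finite B" "P_indep \<sigma> \<delta> B"
  shows "\<exists>A. P_basis \<sigma> \<delta> A (Pclosure \<sigma> \<delta> B) \<and> ham_wt A (proj \<sigma> \<delta> B A h) = skew_wt \<sigma> \<delta> B h"
proof -
  obtain A where A: "P_basis \<sigma> \<delta> A (Pclosure \<sigma> \<delta> B)"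
    and "card (A \<inter> (zeros \<sigma> \<delta> (interp \<sigma> \<delta> B h) \<inter> Pclosure \<sigma> \<delta> B))
      = Rk \<sigma> \<delta> (zeros \<sigma> \<delta> (interp \<sigma> \<delta> B h) \<inter> Pclosure \<sigma> \<delta> B)"
    using ex_P_basis_card_Int_eq_Rk[OF assms P_closed_zeros_Int_Pclosure] by blast
  then show ?thesis
    using assms by (auto simp: skew_wt_def Rk_Pclosure ham_wt_proj)
qed

lemma proj_diff:
  assumes "finite B" "P_indep \<sigma> \<delta> B" "B \<noteq> {}" "f \<in> vecs B" "g \<in> vecs B"
  shows "proj \<sigma> \<delta> B A (\<lambda>i. f i - g i) = (\<lambda>i. proj \<sigma> \<delta> B A f i - proj \<sigma> \<delta> B A g i)"
  using interp_diff[OF assms] by (auto simp: proj_def E_def skew_eval_diff)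

lemma proj_inj:
  assumes "finite B" "P_indep \<sigma> \<delta> B" "B \<noteq> {}" "P_basis \<sigma> \<delta> A (Pclosure \<sigma> \<delta> B)"
    and "f \<in> vecs B" "g \<in> vecs B" "proj \<sigma> \<delta> B A f = proj \<sigma> \<delta> B A g"
  shows "f = g"
proof -
  have "finite A" "card A = card B" "P_indep \<sigma> \<delta> A"
    using P_basis_finite_card[OF assms(1,2,4)] assms(4) by (auto simp: P_basis_def)
  then have "interp \<sigma> \<delta> B f = interp \<sigma> \<delta> B g"
    using E_inj degree_interp[OF assms(1-3)] assms(5-7) by (metis proj_def)
  then show ?thesis using E_interp[OF assms(1-3)] assms(5,6) by metis
qed

lemma ham_dist_proj_eq_Inf:
  assumes "finite B" "P_indep \<sigma> \<delta> B" "B \<noteq> {}" "P_basis \<sigma> \<delta> A (Pclosure \<sigma> \<delta> B)"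
    and "left_code B C"
  shows "ham_dist A (proj \<sigma> \<delta> B A ` C) = Inf ((\<lambda>h. ham_wt A (proj \<sigma> \<delta> B A h)) ` (C - {\<lambda>_. 0}))"
proof -
  have C: "C \<subseteq> vecs B" using assms(5) by (rule left_code_subset_vecs)
  have "{ham_wt A (\<lambda>i. f' i - g' i) | f' g'.
        f' \<in> proj \<sigma> \<delta> B A ` C \<and> g' \<in> proj \<sigma> \<delta> B A ` C \<and> f' \<noteq> g'}
    = {ham_wt A (proj \<sigma> \<delta> B A (\<lambda>i. f i - g i)) | f g. f \<in> C \<and> g \<in> C \<and> f \<noteq> g}"
    using C proj_diff[OF assms(1-3)] proj_inj[OF assms(1-4)] by (auto 0 3 simp: subset_iff) metis+
  then show ?thesis
    unfolding ham_dist_def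
    using left_code_differences_image[OF assms(5), of "\<lambda>h. ham_wt A (proj \<sigma> \<delta> B A h)"] by simp
qed

text \<open>The Singleton bound for the projected code: a nonzero codeword vanishing, after projection,
  on \<open>k - 1\<close> points of \<open>A\<close> exists since \<open>k\<close> unknowns exceed \<open>k - 1\<close> equations.\<close>
lemma ex_codeword_ham_wt_proj_le:
  assumes "finite B" "P_indep \<sigma> \<delta> B" "B \<noteq> {}" "P_basis \<sigma> \<delta> A (Pclosure \<sigma> \<delta> B)"
    and "left_code B C" "left_basis S C" "S \<noteq> {}"
  shows "\<exists>w\<in>C - {\<lambda>_. 0}. ham_wt A (proj \<sigma> \<delta> B A w) \<le> card B - card S + 1"
proof -
  have fA: "finite A" and cA: "card A = card B" using P_basis_finite_card[OF assms(1,2,4)] by auto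
  have fS: "finite S" and SC: "S \<subseteq> C" and iS: "left_indep S"
    using assms(6) by (auto simp: left_basis_def)
  have SB: "S \<subseteq> vecs B" using SC left_code_subset_vecs[OF assms(5)] by blast
  obtain A' where A': "A' \<subseteq> A" "card A' = min (card S - 1) (card B)"
    using obtain_subset_with_card_n[of "min (card S - 1) (card B)" A] cA by auto
  have "finite A'" using A'(1) fA finite_subset by blast
  moreover have "card A' < card S"
    using A'(2) assms(7) fS card_gt_0_iff[of S] by linarith
  ultimately have "\<exists>c. (\<exists>u\<in>S. c u \<noteq> 0) \<and> (\<forall>a\<in>A'. (\<Sum>u\<in>S. c u * proj \<sigma> \<delta> B A u a) = 0)"
    using fS by (rule homogeneous_system_nontrivial_solution[rotated])
  then obtain c where c: "\<exists>u\<in>S. c u \<noteq> 0" "\<forall>a\<in>A'. (\<Sum>u\<in>S. c u * proj \<sigma> \<delta> B A u a) = 0"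
    by (elim exE conjE)
  define w where "w = lcomb c S"
  have "w \<in> C" unfolding w_def by (rule left_code_lcomb[OF assms(5) fS SC])
  moreover have "w \<noteq> (\<lambda>_. 0)" using c(1) iS unfolding w_def left_indep_def by blast
  ultimately have w: "w \<in> C - {\<lambda>_. 0}" by blast
  have "proj \<sigma> \<delta> B A w a = (\<Sum>u\<in>S. c u * proj \<sigma> \<delta> B A u a)" if "a \<in> A" for a
    using that by (simp add: w_def proj_def E_def interp_lcomb[OF assms(1-3) fS SB]
        skew_eval_sum skew_eval_lsmult)
  then have "{a\<in>A. proj \<sigma> \<delta> B A w a \<noteq> 0} \<subseteq> A - A'" using c(2) A'(1) by auto
  then have "ham_wt A (proj \<sigma> \<delta> B A w) \<le> card (A - A')"
    unfolding ham_wt_def using fA by (intro card_mono) auto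
  also have "\<dots> \<le> card B - card S + 1"
    using A' fA cA by (simp add: card_Diff_subset finite_subset)
  finally show ?thesis using w by blast
qed

end

theorem mainTheorem5:
  fixes \<sigma> \<delta> :: "'a::division_ring \<Rightarrow> 'a"
    and \<Omega> B :: "'a set" and C :: "('a \<Rightarrow> 'a) set" and n k :: nat
  assumes "ring_endo \<sigma>"
    and "sigma_derivation \<sigma> \<delta>"
    and "P_closed \<sigma> \<delta> \<Omega>"
    and "finite B" and "P_basis \<sigma> \<delta> B \<Omega>"
    and "n = Rk \<sigma> \<delta> \<Omega>"
    and "left_code B C" and "left_dim C = k" and "k \<ge> 1"
  shows "skew_dist \<sigma> \<delta> B C = n - k + 1 \<longleftrightarrow>
    (\<forall>A. P_basis \<sigma> \<delta> A \<Omega> \<longrightarrow> ham_dist A (proj \<sigma> \<delta> B A ` C) = n - k + 1)"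
proof -
  interpret skew_polynomial_ring \<sigma> \<delta> using assms(1,2) by unfold_locales
  have \<Omega>: "\<Omega> = Pclosure \<sigma> \<delta> B" and iB: "P_indep \<sigma> \<delta> B"
    using assms(5) by (auto simp: P_basis_def)
  have n: "n = card B" using assms(4,5,6) Rk_eq_card by simp
  obtain S where S: "left_basis S C" "card S = k"
    using ex_left_basis[OF assms(7,4)] assms(8) by (metis someI_ex left_dim_def)
  then have "S \<noteq> {}" using assms(9) by auto
  then obtain v where "v \<in> C" "v \<noteq> (\<lambda>_. 0)"
    using S(1) left_indep_nonzero by (fastforce simp: left_basis_def)
  then have B: "B \<noteq> {}" using left_code_subset_vecs[OF assms(7)] by (auto simp: vecs_def)
  have "Inf (skew_wt \<sigma> \<delta> B ` (C - {\<lambda>_. 0})) = n - k + 1 \<longleftrightarrow>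
      (\<forall>A\<in>{A. P_basis \<sigma> \<delta> A \<Omega>}.
         Inf ((\<lambda>h. ham_wt A (proj \<sigma> \<delta> B A h)) ` (C - {\<lambda>_. 0})) = n - k + 1)"
    unfolding \<Omega>
  proof (rule Inf_pointwise_min_eq_iff)
    show "{A. P_basis \<sigma> \<delta> A (Pclosure \<sigma> \<delta> B)} \<noteq> {}" using assms(5) \<Omega> by blast
    show "skew_wt \<sigma> \<delta> B h \<le> ham_wt A (proj \<sigma> \<delta> B A h)"
      if "A \<in> {A. P_basis \<sigma> \<delta> A (Pclosure \<sigma> \<delta> B)}" for A h
      using skew_wt_le_ham_wt_proj[OF assms(4) iB] that by blast
    show "\<exists>A\<in>{A. P_basis \<sigma> \<delta> A (Pclosure \<sigma> \<delta> B)}. ham_wt A (proj \<sigma> \<delta> B A h) = skew_wt \<sigma> \<delta> B h"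
      for h using ex_P_basis_skew_wt_eq_ham_wt_proj[OF assms(4) iB] by blast
    show "\<exists>h\<in>C - {\<lambda>_. 0}. ham_wt A (proj \<sigma> \<delta> B A h) \<le> n - k + 1"
      if "A \<in> {A. P_basis \<sigma> \<delta> A (Pclosure \<sigma> \<delta> B)}" for A
      using ex_codeword_ham_wt_proj_le[OF assms(4) iB B _ assms(7) S(1) \<open>S \<noteq> {}\<close>] that S(2) n
      by simp
  qed
  then show ?thesis
    using skew_dist_eq_Inf[OF assms(7)] ham_dist_proj_eq_Inf[OF assms(4) iB B _ assms(7)] \<Omega>
    by simp
qed

end
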